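(* Let $T$ be a tree, $f_1,f_2$ proper 3-colorings of $T$, and $h\in D(f_1,f_2)$. Then there is a walk from $f_1$ to $f_2$ in $\mathcal{C}_3(T)$ of length $\|h\|_1$ in which each vertex $w$ is toggled exactly $|h(w)|$ times, every such toggle changing the color of $w$ by $\operatorname{sign}(h(w))\in\{+1,-1\}$ (in $\mathbb{Z}/3\mathbb{Z}$). In particular the walk contains no two steps that toggle the same vertex in opposite directions.
   Context: Let $T$ be a finite tree with vertex set $V$ and edge set $E$. A proper 3-coloring of $T$ is a map $f\colon V\to\mathbb{Z}/3\mathbb{Z}$ with $f(u)\neq f(v)$ for every edge $uv\in E$. The 3-coloring graph $\mathcal{C}_3(T)$ has the proper 3-colorings as vertices, two colorings adjacent iff they differ at exactly one vertex; a step of a walk changing the color of $w$ by $\pm1$ is a $(\pm1)$-toggle at $w$. A labeling of $T$ is a map $h\colon V\to\mathbb{Z}$ with $|h(u)-h(v)|\le 1$ for every edge $uv\in E$, and $\|h\|_1=\sum_{v\in V}|h(v)|$. Given proper 3-colorings $f,g$, $D(f,g)$ is the set of labelings $h$ with $h(v)\equiv g(v)-f(v)\pmod 3$ for all $v\in V$. *)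

theory Defs
  imports Main
begin

definition simple_graph :: "'a set \<Rightarrow> ('a \<times> 'a) set \<Rightarrow> bool" where
  "simple_graph V E \<longleftrightarrow> E \<subseteq> V \<times> V \<and> sym E \<and> irrefl E"

definition is_cycle :: "('a \<times> 'a) set \<Rightarrow> 'a list \<Rightarrow> bool" where
  "is_cycle E cs \<longleftrightarrow> length cs \<ge> 3 \<and> distinct cs
     \<and> (\<forall>i. Suc i < length cs \<longrightarrow> (cs ! i, cs ! Suc i) \<in> E)
     \<and> (last cs, hd cs) \<in> E"

definition is_tree :: "'a set \<Rightarrow> ('a \<times> 'a) set \<Rightarrow> bool" where
  "is_tree V E \<longleftrightarrow> simple_graph V E \<and> finite V \<and> V \<noteq> {}
     \<and> (\<forall>u\<in>V. \<forall>v\<in>V. (u, v) \<in> E\<^sup>*)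
     \<and> \<not> (\<exists>cs. is_cycle E cs)"

(* Colours in Z/3Z are represented by the integers 0,1,2 with arithmetic mod 3.
   A colouring is a function on V, extended by 0 outside V so that colourings
   are determined by their values on V. *)
definition proper3 :: "'a set \<Rightarrow> ('a \<times> 'a) set \<Rightarrow> ('a \<Rightarrow> int) \<Rightarrow> bool" where
  "proper3 V E f \<longleftrightarrow> (\<forall>v\<in>V. f v \<in> {0, 1, 2}) \<and> (\<forall>v. v \<notin> V \<longrightarrow> f v = 0)
     \<and> (\<forall>(u, v)\<in>E. f u \<noteq> f v)"

definition col_adj :: "'a set \<Rightarrow> ('a \<Rightarrow> int) \<Rightarrow> ('a \<Rightarrow> int) \<Rightarrow> bool" where
  "col_adj V f g \<longleftrightarrow> (\<exists>!w. w \<in> V \<and> f w \<noteq> g w)"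

definition col_walk :: "'a set \<Rightarrow> ('a \<times> 'a) set \<Rightarrow> ('a \<Rightarrow> int) list \<Rightarrow> bool" where
  "col_walk V E cs \<longleftrightarrow> cs \<noteq> [] \<and> (\<forall>c\<in>set cs. proper3 V E c)
     \<and> (\<forall>i. Suc i < length cs \<longrightarrow> col_adj V (cs ! i) (cs ! Suc i))"

definition labeling :: "'a set \<Rightarrow> ('a \<times> 'a) set \<Rightarrow> ('a \<Rightarrow> int) \<Rightarrow> bool" where
  "labeling V E h \<longleftrightarrow> (\<forall>(u, v)\<in>E. \<bar>h u - h v\<bar> \<le> 1)"

definition norm1 :: "'a set \<Rightarrow> ('a \<Rightarrow> int) \<Rightarrow> int" where
  "norm1 V h = (\<Sum>v\<in>V. \<bar>h v\<bar>)"

definition Dset :: "'a set \<Rightarrow> ('a \<times> 'a) set \<Rightarrow> ('a \<Rightarrow> int) \<Rightarrow> ('a \<Rightarrow> int) \<Rightarrow> ('a \<Rightarrow> int) set" where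
  "Dset V E f g = {h. labeling V E h \<and> (\<forall>v\<in>V. h v mod 3 = (g v - f v) mod 3)}"

end

theory Submission
  imports Defs
begin

text \<open>Induction on the norm of \<open>h\<close>. Let \<open>m = h w0\<close> have maximal absolute value and \<open>s = sgn m\<close>.
  If a neighbour \<open>u\<close> of a vertex \<open>w\<close> with \<open>h w = m\<close> blocks the \<open>s\<close>-toggle at \<open>w\<close>, i.e.
  \<open>f1 u = f1 w + s\<close>, then \<open>h u = m\<close>: by maximality the only alternative is \<open>h u = m - s\<close>,
  which would force \<open>f2 u = f2 w\<close>. So if every vertex labelled \<open>m\<close> were blocked, following
  blocking neighbours would be a walk along which the colour moves by \<open>s\<close> at each step; it
  never backtracks, so in a finite graph it closes a cycle. Hence some vertex labelled \<open>m\<close>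
  can be toggled by \<open>s\<close>, and lowering its label by \<open>s\<close> keeps the labeling in \<open>D\<close> and
  decreases the norm by one.\<close>

lemma abs_le_neighbor_cases:
  fixes x y :: int
  assumes "\<bar>x - y\<bar> \<le> 1" and "\<bar>y\<bar> \<le> \<bar>x\<bar>"
  shows "y = x \<or> y = x - sgn x"
  using assms by (cases x "0::int" rule: linorder_cases) (auto simp: sgn_if)

lemma abs_diff_sgn:
  fixes x :: int
  assumes "x \<noteq> 0"
  shows "\<bar>x - sgn x\<bar> = \<bar>x\<bar> - 1"
  using assms by (auto simp: sgn_if)

lemma sgn_diff_sgn:
  fixes x :: int
  assumes "x - sgn x \<noteq> 0"
  shows "sgn (x - sgn x) = sgn x"
  using assms by (auto simp: sgn_if)

lemma norm1_nonneg: "0 \<le> norm1 V h"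
  by (simp add: norm1_def sum_nonneg)

lemma norm1_eq_0_iff: "finite V \<Longrightarrow> norm1 V h = 0 \<longleftrightarrow> (\<forall>v\<in>V. h v = 0)"
  by (simp add: norm1_def sum_nonneg_eq_0_iff)

lemma norm1_decrement:
  assumes "finite V" and "w \<in> V" and "h w \<noteq> 0"
  shows "norm1 V h = norm1 V (h(w := h w - sgn (h w))) + 1"
proof -
  have "norm1 V h = \<bar>h w\<bar> + (\<Sum>v\<in>V - {w}. \<bar>h v\<bar>)"
    unfolding norm1_def using sum.remove[OF assms(1,2)] by simp
  moreover have "norm1 V (h(w := h w - sgn (h w))) = \<bar>h w - sgn (h w)\<bar> + (\<Sum>v\<in>V - {w}. \<bar>h v\<bar>)"
    unfolding norm1_def using sum.remove[OF assms(1,2), of "\<lambda>v. \<bar>(h(w := h w - sgn (h w))) v\<bar>"]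
    by simp
  ultimately show ?thesis
    using abs_diff_sgn[OF assms(3)] by simp
qed

lemma nonbacktracking_successor_imp_cycle:
  assumes "finite S" and "w0 \<in> S"
    and succ: "\<And>w. w \<in> S \<Longrightarrow> g w \<in> S \<and> (w, g w) \<in> E \<and> g (g w) \<noteq> w"
  shows "\<exists>cs. is_cycle E cs"
proof -
  define sq where "sq i = (g ^^ i) w0" for i
  have sq_in: "sq i \<in> S" for i
    by (induction i) (use assms in \<open>auto simp: sq_def\<close>)
  have sq_Suc: "sq (Suc i) = g (sq i)" for i
    by (simp add: sq_def)
  have "\<not> inj sq"
  proof
    assume "inj sq"
    moreover have "finite (range sq)"
      using sq_in \<open>finite S\<close> by (meson finite_subset image_subsetI)
    ultimately show False
      using finite_imageD by blast
  qed
  then have "\<exists>d. 0 < d \<and> (\<exists>i. sq (i + d) = sq i)"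
    unfolding inj_def by (metis less_imp_add_positive linorder_neqE_nat)
  then obtain d i where d: "0 < d" "sq (i + d) = sq i"
    and minimal: "\<And>d' j. 0 < d' \<Longrightarrow> d' < d \<Longrightarrow> sq (j + d') \<noteq> sq j"
    unfolding exists_least_iff[of "\<lambda>d. 0 < d \<and> (\<exists>i. sq (i + d) = sq i)"] by blast
  have "d \<noteq> 1"
    using succ[OF sq_in[of i]] d by (auto simp: sq_Suc)
  moreover have "d \<noteq> 2"
    using succ[OF sq_in[of i]] d by (auto simp: sq_Suc numeral_2_eq_2)
  moreover have "inj_on sq {i..<i + d}"
  proof (rule inj_onI, rule ccontr)
    fix a b assume ab: "a \<in> {i..<i + d}" "b \<in> {i..<i + d}" "sq a = sq b" "a \<noteq> b"
    show False
    proof (cases "a < b")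
      case True
      then show ?thesis using minimal[of "b - a" a] ab by simp arith
    next
      case False
      then show ?thesis using minimal[of "a - b" b] ab by simp arith
    qed
  qed
  moreover have "sq i = g (sq (i + d - 1))"
    using d sq_Suc[of "i + d - 1"] by simp
  ultimately have "is_cycle E (map sq [i..<i + d])"
    using d succ[OF sq_in] by (auto simp: is_cycle_def distinct_map last_map hd_map sq_Suc)
  then show ?thesis by blast
qed

lemma proper3_mod_3: "proper3 V E f \<Longrightarrow> f v mod 3 = f v"
  by (cases "v \<in> V") (auto simp: proper3_def)

lemma Dset_zero_imp_eq:
  assumes "proper3 V E f1" and "proper3 V E f2" and "h \<in> Dset V E f1 f2"
    and "\<forall>v\<in>V. h v = 0"
  shows "f1 = f2"
proof
  fix v show "f1 v = f2 v"
  proof (cases "v \<in> V")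
    case True
    then have "f1 v mod 3 = f2 v mod 3"
      using assms(3,4) by (auto simp: Dset_def mod_eq_dvd_iff dvd_diff_commute)
    then show ?thesis
      by (simp add: proper3_mod_3[OF assms(1)] proper3_mod_3[OF assms(2)])
  next
    case False
    then show ?thesis
      using assms(1,2) by (simp add: proper3_def)
  qed
qed

definition toggle :: "'a \<Rightarrow> int \<Rightarrow> ('a \<Rightarrow> int) \<Rightarrow> 'a \<Rightarrow> int" where
  "toggle w s f = f(w := (f w + s) mod 3)"

lemma toggle_ne_iff:
  assumes "proper3 V E f" and "s \<in> {1, -1}"
  shows "toggle w s f v \<noteq> f v \<longleftrightarrow> v = w"
proof -
  have "(f w + s) mod 3 \<noteq> f w mod 3"
    using assms(2) by (auto simp: mod_eq_dvd_iff)
  then show ?thesis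
    by (auto simp: toggle_def proper3_mod_3[OF assms(1)])
qed

lemma proper3_toggle:
  assumes "proper3 V E f" and "sym E" and "w \<in> V"
    and free: "\<And>u. (w, u) \<in> E \<Longrightarrow> f u \<noteq> (f w + s) mod 3"
  shows "proper3 V E (toggle w s f)"
  unfolding proper3_def
proof (intro conjI ballI allI impI)
  fix e assume "e \<in> E"
  then obtain a b where e: "e = (a, b)" "(a, b) \<in> E" "(b, a) \<in> E"
    using \<open>sym E\<close> by (cases e) (auto dest: symD)
  then show "case e of (a, b) \<Rightarrow> toggle w s f a \<noteq> toggle w s f b"
  proof (cases "a = w \<or> b = w")
    case True
    then show ?thesis
      using e free[of a] free[of b] \<open>proper3 V E f\<close> by (auto simp: proper3_def toggle_def)
  next
    case False
    then show ?thesis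
      using e \<open>proper3 V E f\<close> by (auto simp: proper3_def toggle_def)
  qed
qed (use assms in \<open>auto simp: proper3_def toggle_def\<close>)

lemma Dset_toggle:
  assumes h: "h \<in> Dset V E f1 f2" and EV: "E \<subseteq> V \<times> V" and "w \<in> V"
    and max: "\<And>v. v \<in> V \<Longrightarrow> \<bar>h v\<bar> \<le> \<bar>h w\<bar>"
  shows "h(w := h w - sgn (h w)) \<in> Dset V E (toggle w (sgn (h w)) f1) f2"
  unfolding Dset_def
proof (intro CollectI conjI ballI)
  have step: "\<bar>h w - sgn (h w) - h v\<bar> \<le> 1" if "(w, v) \<in> E \<or> (v, w) \<in> E" for v
  proof -
    have "\<bar>h w - h v\<bar> \<le> 1"
      using h that by (auto simp: Dset_def labeling_def abs_minus_commute)
    moreover have "\<bar>h v\<bar> \<le> \<bar>h w\<bar>"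
      using max EV that by auto
    ultimately show ?thesis
      using abs_le_neighbor_cases by fastforce
  qed
  have "labeling V E h"
    using h by (simp add: Dset_def)
  then show "labeling V E (h(w := h w - sgn (h w)))"
    using step by (auto simp: labeling_def abs_minus_commute)
next
  fix v assume "v \<in> V"
  then have "h v mod 3 = (f2 v - f1 v) mod 3"
    using h by (simp add: Dset_def)
  then show "(h(w := h w - sgn (h w))) v mod 3 = (f2 v - toggle w (sgn (h w)) f1 v) mod 3"
    by (auto simp: toggle_def mod_simps) (metis diff_diff_eq mod_diff_left_eq)
qed

lemma blocking_neighbor_same_label:
  assumes f2: "proper3 V E f2" and h: "h \<in> Dset V E f1 f2"
    and wu: "(w, u) \<in> E" "w \<in> V" "u \<in> V" and le: "\<bar>h u\<bar> \<le> \<bar>h w\<bar>"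
    and blocks: "f1 u = (f1 w + sgn (h w)) mod 3"
  shows "h u = h w"
proof (rule ccontr)
  assume "h u \<noteq> h w"
  moreover have "\<bar>h w - h u\<bar> \<le> 1"
    using h wu by (auto simp: Dset_def labeling_def)
  ultimately have down: "h u = h w - sgn (h w)"
    using abs_le_neighbor_cases le by blast
  have "3 dvd h u - (f2 u - f1 u)" "3 dvd h w - (f2 w - f1 w)"
    using h wu by (auto simp: Dset_def mod_eq_dvd_iff)
  moreover have "3 dvd f1 u - (f1 w + sgn (h w))"
    by (metis blocks mod_mod_trivial mod_eq_dvd_iff)
  moreover have "f2 u - f2 w
      = (h w - (f2 w - f1 w)) - (h u - (f2 u - f1 u)) + (f1 u - (f1 w + sgn (h w)))"
    using down by simp
  ultimately have "3 dvd f2 u - f2 w"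
    by (metis dvd_add dvd_diff)
  then have "f2 u = f2 w"
    by (metis mod_eq_dvd_iff proper3_mod_3[OF f2])
  then show False
    using wu f2 by (auto simp: proper3_def)
qed

lemma exists_free_vertex:
  assumes tree: "is_tree V E" and f1: "proper3 V E f1" and f2: "proper3 V E f2"
    and h: "h \<in> Dset V E f1 f2" and "w0 \<in> V" and "h w0 \<noteq> 0"
    and max: "\<And>v. v \<in> V \<Longrightarrow> \<bar>h v\<bar> \<le> \<bar>h w0\<bar>"
  shows "\<exists>w\<in>V. h w = h w0 \<and> (\<forall>u. (w, u) \<in> E \<longrightarrow> f1 u \<noteq> (f1 w + sgn (h w)) mod 3)"
proof (rule ccontr)
  assume no_free: "\<not> ?thesis"
  define S where "S = {w \<in> V. h w = h w0}"
  define s where "s = sgn (h w0)"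
  have EV: "E \<subseteq> V \<times> V"
    using tree by (simp add: is_tree_def simple_graph_def)
  have "\<exists>u \<in> S. (w, u) \<in> E \<and> f1 u = (f1 w + s) mod 3" if "w \<in> S" for w
  proof -
    obtain u where u: "(w, u) \<in> E" "f1 u = (f1 w + s) mod 3"
      using no_free \<open>w \<in> S\<close> by (auto simp: S_def s_def)
    have "w \<in> V" "h w = h w0" "u \<in> V"
      using \<open>w \<in> S\<close> EV u(1) by (auto simp: S_def)
    then have "h u = h w"
      using blocking_neighbor_same_label[OF f2 h u(1)] max u(2) by (simp add: s_def)
    then show ?thesis
      using u EV \<open>w \<in> S\<close> by (auto simp: S_def)
  qed
  then obtain g where g: "\<And>w. w \<in> S \<Longrightarrow> g w \<in> S \<and> (w, g w) \<in> E \<and> f1 (g w) = (f1 w + s) mod 3"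
    by metis
  have "g (g w) \<noteq> w" if "w \<in> S" for w
  proof
    assume "g (g w) = w"
    then have "(f1 w + 2 * s) mod 3 = f1 w mod 3"
      using g[OF that] g[of "g w"] that by (simp add: mod_simps proper3_mod_3[OF f1] algebra_simps)
    moreover have "s \<in> {1, -1}"
      using \<open>h w0 \<noteq> 0\<close> by (auto simp: s_def sgn_if)
    ultimately show False
      by (auto simp: mod_eq_dvd_iff)
  qed
  then have "\<exists>cs. is_cycle E cs"
    using nonbacktracking_successor_imp_cycle[of S w0 g E] g tree \<open>w0 \<in> V\<close>
    by (auto simp: S_def is_tree_def)
  then show False
    using tree by (simp add: is_tree_def)
qed

lemma exists_reducing_toggle:
  assumes tree: "is_tree V E" and f1: "proper3 V E f1" and f2: "proper3 V E f2"
    and h: "h \<in> Dset V E f1 f2" and nonzero: "\<exists>v\<in>V. h v \<noteq> 0"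
  shows "\<exists>w\<in>V. h w \<noteq> 0 \<and> proper3 V E (toggle w (sgn (h w)) f1)
    \<and> h(w := h w - sgn (h w)) \<in> Dset V E (toggle w (sgn (h w)) f1) f2"
proof -
  have V: "finite V" and EV: "E \<subseteq> V \<times> V" and "sym E"
    using tree by (auto simp: is_tree_def simple_graph_def)
  obtain w0 where "w0 \<in> V" and w0: "\<bar>h w0\<bar> = Max ((\<lambda>v. \<bar>h v\<bar>) ` V)"
    using Max_in[of "(\<lambda>v. \<bar>h v\<bar>) ` V"] V nonzero by fastforce
  have max0: "\<bar>h v\<bar> \<le> \<bar>h w0\<bar>" if "v \<in> V" for v
    unfolding w0 using V that by simp
  then have "h w0 \<noteq> 0"
    using nonzero by fastforce
  then obtain w where "w \<in> V" "h w = h w0"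
    and free: "\<And>u. (w, u) \<in> E \<Longrightarrow> f1 u \<noteq> (f1 w + sgn (h w)) mod 3"
    using exists_free_vertex[OF tree f1 f2 h \<open>w0 \<in> V\<close>] max0 by blast
  with max0 \<open>h w0 \<noteq> 0\<close> have max: "\<And>v. v \<in> V \<Longrightarrow> \<bar>h v\<bar> \<le> \<bar>h w\<bar>" and "h w \<noteq> 0"
    by auto
  then show ?thesis
    using \<open>w \<in> V\<close> proper3_toggle[OF f1 \<open>sym E\<close> \<open>w \<in> V\<close> free] Dset_toggle[OF h EV \<open>w \<in> V\<close> max]
    by blast
qed

definition toggles :: "('a \<Rightarrow> int) list \<Rightarrow> 'a \<Rightarrow> nat set" where
  "toggles cs w = {i. Suc i < length cs \<and> (cs ! i) w \<noteq> (cs ! Suc i) w}"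

lemma finite_toggles [simp]: "finite (toggles cs w)"
  by (rule finite_subset[of _ "{..<length cs}"]) (auto simp: toggles_def)

lemma toggles_Cons:
  assumes "cs \<noteq> []"
  shows "toggles (f # cs) w = {i. i = 0 \<and> f w \<noteq> hd cs w} \<union> Suc ` toggles cs w"
proof (rule set_eqI)
  fix i
  show "i \<in> toggles (f # cs) w \<longleftrightarrow> i \<in> {i. i = 0 \<and> f w \<noteq> hd cs w} \<union> Suc ` toggles cs w"
    using assms by (cases i) (auto simp: toggles_def hd_conv_nth)
qed

lemma card_toggles_Cons:
  assumes "cs \<noteq> []"
  shows "card (toggles (f # cs) w) = (if f w \<noteq> hd cs w then 1 else 0) + card (toggles cs w)"
  unfolding toggles_Cons[OF assms] by (subst card_Un_disjoint) (auto simp: card_image)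

lemma col_walk_Cons:
  assumes "col_walk V E cs" and "proper3 V E f" and "col_adj V f (hd cs)"
  shows "col_walk V E (f # cs)"
  using assms by (auto simp: col_walk_def hd_conv_nth nth_Cons split: nat.splits)

definition walk_realizes :: "'a set \<Rightarrow> ('a \<times> 'a) set \<Rightarrow> ('a \<Rightarrow> int) \<Rightarrow> ('a \<Rightarrow> int) list \<Rightarrow> bool"
  where
  "walk_realizes V E h cs \<longleftrightarrow> col_walk V E cs \<and> int (length cs - 1) = norm1 V h
     \<and> (\<forall>w\<in>V. card (toggles cs w) = nat \<bar>h w\<bar>
          \<and> (\<forall>i\<in>toggles cs w. (cs ! Suc i) w = ((cs ! i) w + sgn (h w)) mod 3))"

lemma walk_realizes_singleton:
  assumes "proper3 V E f" and "\<forall>v\<in>V. h v = 0"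
  shows "walk_realizes V E h [f]"
  using assms by (simp add: walk_realizes_def col_walk_def toggles_def norm1_def)

lemma walk_realizes_Cons_toggle:
  assumes walk: "walk_realizes V E (h(w := h w - sgn (h w))) cs"
    and hd: "hd cs = toggle w (sgn (h w)) f"
    and f: "proper3 V E f" and "finite V" and "w \<in> V" and "h w \<noteq> 0"
  shows "walk_realizes V E h (f # cs)"
proof -
  let ?h' = "h(w := h w - sgn (h w))"
  have "cs \<noteq> []"
    using walk by (simp add: walk_realizes_def col_walk_def)
  have sgn: "sgn (h w) \<in> {1, -1}"
    using \<open>h w \<noteq> 0\<close> by (auto simp: sgn_if)
  have changed: "f v \<noteq> hd cs v \<longleftrightarrow> v = w" for v
    using toggle_ne_iff[OF f sgn] hd by metis
  have "col_adj V f (hd cs)"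
    unfolding col_adj_def using changed \<open>w \<in> V\<close> by (intro ex1I[of _ w]) auto
  then have "col_walk V E (f # cs)"
    using walk f col_walk_Cons by (auto simp: walk_realizes_def)
  moreover have "int (length (f # cs) - 1) = norm1 V h"
  proof -
    have "int (length cs - 1) = norm1 V ?h'"
      using walk by (simp add: walk_realizes_def)
    then show ?thesis
      using \<open>cs \<noteq> []\<close> norm1_decrement[of V w h] assms(4-6) by (cases cs) auto
  qed
  moreover have "card (toggles (f # cs) v) = nat \<bar>h v\<bar>" if "v \<in> V" for v
    using walk that abs_diff_sgn[OF \<open>h w \<noteq> 0\<close>] \<open>h w \<noteq> 0\<close>
    by (auto simp: walk_realizes_def card_toggles_Cons[OF \<open>cs \<noteq> []\<close>] changed)
  moreover have "((f # cs) ! Suc i) v = (((f # cs) ! i) v + sgn (h v)) mod 3"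
    if "v \<in> V" "i \<in> toggles (f # cs) v" for v i
  proof (cases i)
    case 0
    then show ?thesis
      using that \<open>cs \<noteq> []\<close> changed hd by (auto simp: toggles_Cons toggle_def hd_conv_nth)
  next
    case (Suc k)
    then have k: "k \<in> toggles cs v"
      using that \<open>cs \<noteq> []\<close> by (auto simp: toggles_Cons)
    then have "?h' v \<noteq> 0"
      using walk \<open>v \<in> V\<close> by (auto simp: walk_realizes_def card_gt_0_iff[symmetric])
    then have "sgn (?h' v) = sgn (h v)"
      using sgn_diff_sgn by auto
    then show ?thesis
      using walk k \<open>v \<in> V\<close> Suc by (auto simp: walk_realizes_def)
  qed
  ultimately show ?thesis
    by (simp add: walk_realizes_def)
qed

lemma walk_realizes_exists:
  assumes tree: "is_tree V E" and f2: "proper3 V E f2"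
  shows "proper3 V E f1 \<Longrightarrow> h \<in> Dset V E f1 f2
    \<Longrightarrow> \<exists>cs. walk_realizes V E h cs \<and> hd cs = f1 \<and> last cs = f2"
proof (induction "nat (norm1 V h)" arbitrary: f1 h)
  case 0
  have V: "finite V"
    using tree by (simp add: is_tree_def)
  then have "\<forall>v\<in>V. h v = 0"
    using 0 norm1_nonneg[of V h] norm1_eq_0_iff[of V h] by simp
  then show ?case
    using Dset_zero_imp_eq[OF "0.prems"(1) f2 "0.prems"(2)] walk_realizes_singleton "0.prems"(1)
    by fastforce
next
  case (Suc n)
  have V: "finite V"
    using tree by (simp add: is_tree_def)
  then have "\<exists>v\<in>V. h v \<noteq> 0"
    using Suc.hyps(2) norm1_eq_0_iff[of V h] by auto
  then obtain w where "w \<in> V" "h w \<noteq> 0"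
    and toggled: "proper3 V E (toggle w (sgn (h w)) f1)"
      "h(w := h w - sgn (h w)) \<in> Dset V E (toggle w (sgn (h w)) f1) f2"
    using exists_reducing_toggle[OF tree Suc.prems(1) f2 Suc.prems(2)] by blast
  moreover have "n = nat (norm1 V (h(w := h w - sgn (h w))))"
    using Suc.hyps(2) norm1_decrement[of V w h] V \<open>w \<in> V\<close> \<open>h w \<noteq> 0\<close>
      norm1_nonneg[of V "h(w := h w - sgn (h w))"]
    by linarith
  ultimately obtain cs where cs: "walk_realizes V E (h(w := h w - sgn (h w))) cs"
    "hd cs = toggle w (sgn (h w)) f1" "last cs = f2"
    using Suc.hyps(1) by blast
  moreover have "cs \<noteq> []"
    using cs(1) by (simp add: walk_realizes_def col_walk_def)
  ultimately show ?case
    using walk_realizes_Cons_toggle[of V E h w cs f1] Suc.prems(1) V \<open>w \<in> V\<close> \<open>h w \<noteq> 0\<close>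
    by fastforce
qed

theorem mainTheorem5:
  fixes V :: "'a set" and E :: "('a \<times> 'a) set" and f1 f2 h :: "'a \<Rightarrow> int"
  assumes "is_tree V E"
    and "proper3 V E f1" and "proper3 V E f2"
    and "h \<in> Dset V E f1 f2"
  shows "\<exists>cs. col_walk V E cs \<and> hd cs = f1 \<and> last cs = f2
           \<and> int (length cs - 1) = norm1 V h
           \<and> (\<forall>w\<in>V.
                card {i. Suc i < length cs \<and> (cs ! i) w \<noteq> (cs ! Suc i) w} = nat \<bar>h w\<bar>
              \<and> (\<forall>i. Suc i < length cs \<and> (cs ! i) w \<noteq> (cs ! Suc i) w
                     \<longrightarrow> (cs ! Suc i) w = ((cs ! i) w + sgn (h w)) mod 3))"
  using walk_realizes_exists[OF assms(1,3,2,4)]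
  by (auto simp: walk_realizes_def toggles_def)

end
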